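(* Assume the Standing setup and the Time series setup, suppose that $R(z)$ is analytic on $\mathcal V_\epsilon\cup\mathcal W_\theta$ for some $\epsilon>0$ and $\theta>0$, that $R$ has a pole of order $2$ at $z=1$ (i.e. $T_{-2}\ne0$ and $T_{-k}=0$ for $k\ge3$), and that $x(-1)=c=T_{-2}d$ for some $d\in Y$. Then for every integer $t\ge0$ $$x(t)=T_{-2}\nabla^{-2}g_+(t)-T_{-1}\nabla^{-1}g_+(t)+T_{-2}d+(t+1)T_{-2}C_0T_{-2}d+\sum_{s=0}^tV_s\,g(t-s),$$ where $\nabla^{-1}g_+(t)=\sum_{s=0}^tg(t-s)$ and $\nabla^{-2}g_+(t)=\sum_{s=0}^t(s+1)g(t-s)$. Moreover $T_{-2}(Y)\subseteq T_{-1}(Y)$, and for every $f\in X^*$ with $f(u)=0$ for all $u\in T_{-2}(Y)$ one has $f(x(t))=-f\big(T_{-1}\sum_{s=0}^tg(t-s)\big)+\sum_{s=0}^tf\big(V_sg(t-s)\big)$ for all $t\ge0$.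
   Context: Standing setup. Let $X,Y$ be complex Banach spaces, let $\mathcal B(X,Y)$ denote the bounded linear operators from $X$ to $Y$ ($\mathcal B(X)=\mathcal B(X,X)$), and let $I_X$ be the identity on $X$. Let $A_0,A_1\in\mathcal B(X,Y)$, let $A(z)=A_0+A_1z$ ($z\in\mathbb C$), and set $C_0=A_0+A_1$, $C_1=A_1$, so that $A(z)=C_0+C_1(z-1)$. Let $R(z)=A(z)^{-1}\in\mathcal B(Y,X)$ where this inverse exists. For $\epsilon>0$ let $\mathcal V_\epsilon=\{z\in\mathbb C:|z|<1+\epsilon,\ z\ne1\}$, and for $\theta>0$ let $\mathcal W_\theta=\{z\in\mathbb C:0<|z-1|<1+\theta\}$. If $R$ is analytic on $\mathcal V_\epsilon$ then it has a Laurent expansion $R(z)=\sum_{j\in\mathbb Z}T_j(z-1)^j$ on $0<|z-1|<\epsilon$ with $T_j\in\mathcal B(Y,X)$, and (known facts) $T_{-k}=(-1)^{k-1}(T_{-1}C_0)^{k-1}T_{-1}$ for $k\ge1$, $T_\ell=(-1)^\ell(T_0C_1)^\ell T_0$ for $\ell\ge0$, $\|(T_{-1}C_0)^k\|^{1/k}\to0$, $T_{-1}C_1+T_0C_0=I_X$, $C_1T_{-1}+C_0T_0=I_Y$, $T_{-1}C_iT_0=0$ and $T_0C_iT_{-1}=0$ for $i=0,1$; moreover $P=T_{-1}C_1$ and $P^c=I_X-P=T_0C_0$ are complementary projections on $X$ and $Q=C_1T_{-1}$, $Q^c=I_Y-Q=C_0T_0$ are complementary projections on $Y$. The singular part $R_{\rm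 sin}(z)=\sum_{k\ge1}T_{-k}(z-1)^{-k}$ converges for all $z\ne1$ and the regular part is $R_{\rm reg}(z)=\sum_{\ell\ge0}T_\ell(z-1)^\ell$. Define, for integers $s\ge0$, $U_s=-(I_X-T_{-1}C_0)^{-s-1}T_{-1}$ (these are the Maclaurin coefficients of $R_{\rm sin}$) and, whenever $I_X-T_0C_1$ is invertible, $V_s=(-1)^s(I_X-T_0C_1)^{-s-1}(T_0C_1)^sT_0$. Time series setup. Let $(\Omega,\Sigma,\mu)$ be a probability space and $\{n(t)\}_{t\in\mathbb Z}$ a sequence of i.i.d. $X$-valued (Bochner measurable) random variables with $\mathbb E\|n(t)\|^2<\infty$ and $\mathbb E[n(t)]=0$. Let $F_0,F_1\in\mathcal B(X,Y)$ and $g(t)=F_0n(t)+F_1n(t-1)$ for $t\in\mathbb Z$. The $X$-valued random sequence $\{x(t)\}_{t\ge-1}$ satisfies $x(-1)=c$ and $A_0x(t)+A_1x(t-1)=g(t)$ for every integer $t\ge0$. Let $g_+(t)=g(t)$ for $t\ge0$ and $g_+(t)=0$ for $t<0$. For integers $t\ge0$, $k\ge1$, $\ell\ge0$ write $\nabla^{-k}g_+(t)=\sum_{s=0}^t\binom{s+k-1}{s}g(t-s)$, $\nabla^\ell g_+(t)=\sum_{s=0}^{\min\{\ell,t\}}\binom{\ell}{s}(-1)^sg(t-s)$ and $\nabla^\ell g(t)=\sum_{s=0}^{\ell}\binom{\ell}{s}(-1)^sg(t-s)$. *)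

theory Defs
  imports "HOL-Analysis.Analysis" "HOL-Probability.Probability"
begin

class complex_banach = banach +
  fixes cscale :: "complex \<Rightarrow> 'a \<Rightarrow> 'a"
  assumes cscale_add_right: "cscale a (x + y) = cscale a x + cscale a y"
    and cscale_add_left: "cscale (a + b) x = cscale a x + cscale b x"
    and cscale_cscale: "cscale a (cscale b x) = cscale (a * b) x"
    and cscale_one: "cscale 1 x = x"
    and cscale_of_real: "cscale (complex_of_real r) x = r *\<^sub>R x"
    and norm_cscale: "norm (cscale a x) = cmod a * norm x"

instantiation complex :: complex_banach
begin
definition cscale_complex :: "complex \<Rightarrow> complex \<Rightarrow> complex" where
  "cscale_complex a x = a * x"
instance
  by standard (auto simp: cscale_complex_def algebra_simps norm_mult scaleR_conv_of_real)
end

text \<open>Bounded complex-linear operators are represented as bounded (real-)linear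
operators (type blinfun) which are in addition complex-homogeneous.\<close>

definition clinear_op :: "('a::complex_banach \<Rightarrow>\<^sub>L 'b::complex_banach) \<Rightarrow> bool" where
  "clinear_op T \<longleftrightarrow> (\<forall>c u. T (cscale c u) = cscale c (T u))"

definition cscaleL :: "complex \<Rightarrow> ('a::complex_banach \<Rightarrow>\<^sub>L 'b::complex_banach) \<Rightarrow> ('a \<Rightarrow>\<^sub>L 'b)" where
  "cscaleL c T = Blinfun (\<lambda>u. cscale c (T u))"

definition pencil :: "('a::complex_banach \<Rightarrow>\<^sub>L 'b::complex_banach) \<Rightarrow> ('a \<Rightarrow>\<^sub>L 'b) \<Rightarrow> complex \<Rightarrow> ('a \<Rightarrow>\<^sub>L 'b)" where
  "pencil A0 A1 z = A0 + cscaleL z A1"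

definition op_holomorphic_on :: "(complex \<Rightarrow> ('a::complex_banach \<Rightarrow>\<^sub>L 'b::complex_banach)) \<Rightarrow> complex set \<Rightarrow> bool" where
  "op_holomorphic_on F S \<longleftrightarrow> open S \<and>
     (\<forall>z\<in>S. \<exists>D. ((\<lambda>w. cscaleL (inverse (w - z)) (F w - F z)) \<longlongrightarrow> D) (at z))"

definition op_invertible :: "('a::complex_banach \<Rightarrow>\<^sub>L 'a) \<Rightarrow> bool" where
  "op_invertible U \<longleftrightarrow> (\<exists>W. W o\<^sub>L U = id_blinfun \<and> U o\<^sub>L W = id_blinfun)"

definition op_inv :: "('a::complex_banach \<Rightarrow>\<^sub>L 'a) \<Rightarrow> ('a \<Rightarrow>\<^sub>L 'a)" where
  "op_inv U = (THE W. W o\<^sub>L U = id_blinfun \<and> U o\<^sub>L W = id_blinfun)"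

definition op_pow :: "('a::complex_banach \<Rightarrow>\<^sub>L 'a) \<Rightarrow> nat \<Rightarrow> ('a \<Rightarrow>\<^sub>L 'a)" where
  "op_pow U k = ((\<lambda>W. U o\<^sub>L W) ^^ k) id_blinfun"

definition Vcoef :: "('y::complex_banach \<Rightarrow>\<^sub>L 'x::complex_banach) \<Rightarrow> ('x \<Rightarrow>\<^sub>L 'y) \<Rightarrow> nat \<Rightarrow> ('y \<Rightarrow>\<^sub>L 'x)" where
  "Vcoef T0 C1 s = cscaleL ((-1) ^ s)
      (op_pow (op_inv (id_blinfun - (T0 o\<^sub>L C1))) (Suc s) o\<^sub>L op_pow (T0 o\<^sub>L C1) s o\<^sub>L T0)"

definition bochner_measurable :: "'w measure \<Rightarrow> ('w \<Rightarrow> 'b::real_normed_vector) \<Rightarrow> bool" where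
  "bochner_measurable M f \<longleftrightarrow>
     (\<exists>s. (\<forall>i. simple_function M (s i)) \<and> (AE \<omega> in M. (\<lambda>i. s i \<omega>) \<longlonglongrightarrow> f \<omega>))"

text \<open>Bochner integral (no separability assumption on the target space).\<close>
definition has_bochner_integral_gen :: "'w measure \<Rightarrow> ('w \<Rightarrow> 'b::real_normed_vector) \<Rightarrow> 'b \<Rightarrow> bool" where
  "has_bochner_integral_gen M f v \<longleftrightarrow> bochner_measurable M f \<and>
     (\<exists>s. (\<forall>i. Bochner_Integration.simple_bochner_integrable M (s i)) \<and>
          (\<lambda>i. \<integral>\<^sup>+\<omega>. norm (f \<omega> - s i \<omega>) \<partial>M) \<longlonglongrightarrow> 0 \<and>
          (\<lambda>i. Bochner_Integration.simple_bochner_integral M (s i)) \<longlonglongrightarrow> v)"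

end

theory Submission imports Defs begin

text \<open>
  Comparing coefficients in R(z) A(z) = I = A(z) R(z) along the real segment z = 1 + h gives
  T_j C_0 + T_{j-1} C_1 = \<delta>_{j0} I = C_0 T_j + C_1 T_{j-1}. These identities make P = T_{-1} C_1
  a projection, produce an explicit inverse of I - T_0 C_1 (so that V_s exists), and show that
  the Maclaurin coefficients W_s = (s+1) T_{-2} - T_{-1} + V_s of R solve A_0 W_0 = I and
  A_0 W_{s+1} + A_1 W_s = 0. Since moreover A(1) T_{-2} = C_0 T_{-2} = 0, the sequence
  T_{-2} d + \<Sigma>_{s\<le>t} W_s g(t-s) satisfies the difference equation with x(-1) = T_{-2} d, and it is
  the only solution because A_0 = A(0) is invertible.
\<close>

lemma cscale_zero_left [simp]: "cscale 0 (x::'a::complex_banach) = 0"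
  using norm_cscale[of 0 x] by simp

lemma cscale_zero_right [simp]: "cscale c (0::'a::complex_banach) = 0"
  using norm_cscale[of c 0] by simp

lemma bounded_linear_cscale: "bounded_linear (cscale c :: 'a::complex_banach \<Rightarrow> 'a)"
proof (rule bounded_linear_intro[where K="cmod c"])
  fix r :: real and x :: 'a
  show "cscale c (r *\<^sub>R x) = r *\<^sub>R cscale c x"
    by (metis cscale_of_real cscale_cscale mult.commute)
qed (simp_all add: cscale_add_right norm_cscale mult.commute)

lemma cscaleL_apply: "blinfun_apply (cscaleL c T) u = cscale c (T u)"
  unfolding cscaleL_def
  by (subst bounded_linear_Blinfun_apply)
     (auto intro: bounded_linear_compose[OF bounded_linear_cscale blinfun.bounded_linear_right])

lemma cscaleL_of_real: "cscaleL (complex_of_real r) T = r *\<^sub>R T"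
  by (rule blinfun_eqI) (simp add: cscaleL_apply cscale_of_real blinfun.scaleR_left)

lemma pencil_apply: "blinfun_apply (pencil A0 A1 z) u = A0 u + cscale z (A1 u)"
  by (simp add: pencil_def cscaleL_apply blinfun.add_left)

lemma op_pow_0 [simp]: "op_pow U 0 = id_blinfun"
  by (simp add: op_pow_def)

lemma op_pow_Suc_apply: "blinfun_apply (op_pow U (Suc k)) x = U (op_pow U k x)"
  by (simp add: op_pow_def)

lemma op_inv_eqI:
  assumes left: "W o\<^sub>L U = id_blinfun" and right: "U o\<^sub>L W = id_blinfun"
  shows "op_inv U = W"
  unfolding op_inv_def
proof (rule the_equality)
  fix W' assume "W' o\<^sub>L U = id_blinfun \<and> U o\<^sub>L W' = id_blinfun"
  hence "W' (U z) = z" for z by (metis blinfun_apply_blinfun_compose blinfun_apply_id_blinfun)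
  moreover have "U (W z) = z" for z
    using right by (metis blinfun_apply_blinfun_compose blinfun_apply_id_blinfun)
  ultimately show "W' = W" by (metis blinfun_eqI)
qed (use assms in simp)

lemma power_series_remainder_bound:
  fixes a :: "nat \<Rightarrow> 'a::banach"
  assumes bound: "\<And>j. norm (h0 ^ j *\<^sub>R a j) \<le> B"
    and h: "0 < h" "h \<le> h0 / 2"
    and tail: "(\<lambda>j. h ^ (j + k) *\<^sub>R a (j + k)) sums 0"
  shows "norm (a k) \<le> 2 * B * h / h0 ^ Suc k"
proof -
  define q where "q = h / h0"
  have h0: "h0 > 0" and q: "0 < q" "q \<le> 1/2" using h by (auto simp: q_def field_simps)
  have B: "B \<ge> 0" using bound[of 0] norm_ge_zero order_trans by blast
  have tail_Suc: "(\<lambda>j. h ^ (Suc j + k) *\<^sub>R a (Suc j + k)) sums - (h ^ k *\<^sub>R a k)"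
    using tail by (subst sums_Suc_iff) simp
  have geom: "(\<lambda>j. B * q ^ Suc k * q ^ j) sums (B * q ^ Suc k * (1 / (1 - q)))"
    by (rule sums_mult, rule geometric_sums) (use q in auto)
  have "norm (h ^ (Suc j + k) *\<^sub>R a (Suc j + k)) \<le> B * q ^ Suc k * q ^ j" for j
  proof -
    have "norm (h ^ (Suc j + k) *\<^sub>R a (Suc j + k))
        = q ^ (Suc j + k) * norm (h0 ^ (Suc j + k) *\<^sub>R a (Suc j + k))"
      using h h0 by (simp add: q_def power_divide)
    also have "\<dots> \<le> q ^ (Suc j + k) * B"
      by (intro mult_left_mono[OF bound]) (use q in auto)
    finally show ?thesis by (simp add: power_add mult_ac)
  qed
  hence "norm (- (h ^ k *\<^sub>R a k)) \<le> B * q ^ Suc k * (1 / (1 - q))"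
    by (rule norm_sums_le[OF tail_Suc geom])
  also have "\<dots> \<le> B * q ^ Suc k * 2"
    using q B by (intro mult_left_mono) (auto simp: field_simps)
  finally have "h ^ k * norm (a k) \<le> h ^ k * (2 * B * h / h0 ^ Suc k)"
    using h by (simp add: q_def power_divide mult_ac)
  thus ?thesis by (rule mult_left_le_imp_le) (use h in auto)
qed

lemma power_series_zero_imp_coeffs_zero:
  fixes a :: "nat \<Rightarrow> 'a::banach"
  assumes r: "r > 0" and sums_zero: "\<And>h. 0 < h \<Longrightarrow> h < r \<Longrightarrow> (\<lambda>k. h ^ k *\<^sub>R a k) sums 0"
  shows "a k = 0"
proof (induction k rule: less_induct)
  case (less k)
  define h0 where "h0 = r / 2"
  have h0: "0 < h0" "h0 < r" using r by (auto simp: h0_def)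
  have "Bseq (\<lambda>j. h0 ^ j *\<^sub>R a j)"
    using sums_zero[OF h0] by (intro convergent_imp_Bseq summable_LIMSEQ_zero[THEN convergentI])
      (auto simp: sums_iff)
  then obtain B where B: "B > 0" "\<And>j. norm (h0 ^ j *\<^sub>R a j) \<le> B" by (auto elim: BseqE)
  have le: "norm (a k) \<le> 2 * B * h / h0 ^ Suc k" if "0 < h" "h \<le> h0 / 2" for h
  proof (rule power_series_remainder_bound[OF B(2) that])
    show "(\<lambda>j. h ^ (j + k) *\<^sub>R a (j + k)) sums 0"
      using sums_zero[of h] that h0 less.IH by (subst sums_iff_shift) simp
  qed
  show "a k = 0"
  proof (rule ccontr)
    assume "a k \<noteq> 0"
    define h where "h = min (h0 / 2) (norm (a k) * h0 ^ Suc k / (4 * B))"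
    have "h > 0" using \<open>a k \<noteq> 0\<close> h0 B by (simp add: h_def)
    have "norm (a k) \<le> 2 * B * h / h0 ^ Suc k" using le[OF \<open>h > 0\<close>] by (simp add: h_def)
    also have "\<dots> \<le> 2 * B * (norm (a k) * h0 ^ Suc k / (4 * B)) / h0 ^ Suc k"
      using B h0 by (intro divide_right_mono mult_left_mono) (auto simp: h_def)
    also have "\<dots> = norm (a k) / 2" using B h0 by (simp add: field_simps)
    finally show False using \<open>a k \<noteq> 0\<close> by simp
  qed
qed

lemma power_series_eq_monomial_imp_coeffs:
  fixes a :: "nat \<Rightarrow> 'a::banach"
  assumes "r > 0" and "\<And>h. 0 < h \<Longrightarrow> h < r \<Longrightarrow> (\<lambda>k. h ^ k *\<^sub>R a k) sums (h ^ m *\<^sub>R w)"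
  shows "a k = (if k = m then w else 0)"
proof -
  have "a k - (if k = m then w else 0) = 0"
  proof (rule power_series_zero_imp_coeffs_zero[where a="\<lambda>k. a k - (if k = m then w else 0)", OF \<open>r > 0\<close>])
    fix h :: real assume "0 < h" "h < r"
    have "(\<lambda>k. if k = m then h ^ k *\<^sub>R w else 0) sums (h ^ m *\<^sub>R w)"
      using sums_single[of m "\<lambda>k. h ^ k *\<^sub>R w"] by simp
    from sums_diff[OF assms(2)[OF \<open>0 < h\<close> \<open>h < r\<close>] this]
    show "(\<lambda>k. h ^ k *\<^sub>R (a k - (if k = m then w else 0))) sums 0"
      by (simp add: scaleR_diff_right if_distrib cong: if_cong)
  qed
  thus ?thesis by simp
qed

text \<open>Multiplied by h^2, the identity La (F h) + h Lb (F h) = w equates a power series in h with h^2 w.\<close>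

lemma laurent_pencil_coeff_identity:
  fixes T :: "int \<Rightarrow> 'a::real_normed_vector" and La Lb :: "'a \<Rightarrow> 'v::banach"
  assumes La: "bounded_linear La" and Lb: "bounded_linear Lb" and "r > 0"
    and T_vanishes: "\<And>j. j \<le> -3 \<Longrightarrow> T j = 0"
    and expansion: "\<And>h. 0 < h \<Longrightarrow> h < r \<Longrightarrow> (\<lambda>k. h ^ k *\<^sub>R T (int k - 2)) sums (h\<^sup>2 *\<^sub>R F h)"
    and identity: "\<And>h. 0 < h \<Longrightarrow> h < r \<Longrightarrow> La (F h) + h *\<^sub>R Lb (F h) = w"
  shows "La (T j) + Lb (T (j - 1)) = (if j = 0 then w else 0)"
proof -
  define c where "c k = La (T (int k - 2)) + (case k of 0 \<Rightarrow> 0 | Suc i \<Rightarrow> Lb (T (int i - 2)))" for k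
  have c: "c k = (if k = 2 then w else 0)" for k
  proof (rule power_series_eq_monomial_imp_coeffs[OF \<open>r > 0\<close>])
    fix h :: real assume h: "0 < h" "h < r"
    have "(\<lambda>k. h ^ k *\<^sub>R La (T (int k - 2))) sums La (h\<^sup>2 *\<^sub>R F h)"
      using bounded_linear.sums[OF La expansion[OF h]] by (simp add: linear_simps La)
    moreover have "(\<lambda>k. (h * h ^ k) *\<^sub>R Lb (T (int k - 2))) sums (h *\<^sub>R Lb (h\<^sup>2 *\<^sub>R F h))"
      using sums_scaleR_right[OF bounded_linear.sums[OF Lb expansion[OF h]], of h]
      by (simp add: linear_simps Lb)
    hence "(\<lambda>k. h ^ k *\<^sub>R (case k of 0 \<Rightarrow> 0 | Suc i \<Rightarrow> Lb (T (int i - 2))))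
        sums (h *\<^sub>R Lb (h\<^sup>2 *\<^sub>R F h))"
      using sums_Suc_iff[of "\<lambda>k. h ^ k *\<^sub>R (case k of 0 \<Rightarrow> 0 | Suc i \<Rightarrow> Lb (T (int i - 2)))"]
      by simp
    ultimately have "(\<lambda>k. h ^ k *\<^sub>R c k) sums (h\<^sup>2 *\<^sub>R (La (F h) + h *\<^sub>R Lb (F h)))"
      by (simp add: c_def linear_simps La Lb sums_add algebra_simps)
    thus "(\<lambda>k. h ^ k *\<^sub>R c k) sums (h ^ 2 *\<^sub>R w)" by (simp add: identity[OF h])
  qed
  show ?thesis
  proof (cases "j \<le> -3")
    case True
    thus ?thesis using T_vanishes[of j] T_vanishes[of "j - 1"] La Lb by (simp add: linear_simps)
  next
    case False
    define k where "k = nat (j + 2)"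
    have j: "j = int k - 2" using False by (simp add: k_def)
    show ?thesis
    proof (cases k)
      case 0
      thus ?thesis using c[of 0] T_vanishes[of "-3"] Lb j by (simp add: c_def linear_simps)
    next
      case (Suc i)
      hence "j - 1 = int i - 2" using j by simp
      thus ?thesis using c[of k] Suc j by (auto simp: c_def)
    qed
  qed
qed

lemma laurent_series_pole_order_two_at_real:
  fixes T :: "int \<Rightarrow> ('y::complex_banach \<Rightarrow>\<^sub>L 'x::complex_banach)"
  assumes regular: "(\<lambda>k. cscaleL (complex_of_real h ^ k) (T (int k))) sums P"
    and singular: "(\<lambda>k. cscaleL (complex_of_real h powi - int (Suc k)) (T (- int (Suc k)))) sums Q"
    and T_vanishes: "\<And>j. j \<le> -3 \<Longrightarrow> T j = 0" and "h \<noteq> 0"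
  shows "(\<lambda>k. h ^ k *\<^sub>R T (int k - 2)) sums (h\<^sup>2 *\<^sub>R (P + Q))"
proof -
  define f where "f = (\<lambda>k. cscaleL (complex_of_real h powi - int (Suc k)) (T (- int (Suc k))))"
  have "f k = 0" if "k \<notin> {0, 1}" for k
    using T_vanishes[of "- int (Suc k)"] that by (intro blinfun_eqI) (simp add: f_def cscaleL_apply)
  hence "f sums (f 0 + f 1)"
    using sums_finite[of "{0, 1}" f] by simp
  hence "Q = f 0 + f 1"
    using singular by (simp add: f_def sums_unique2)
  also have "f 0 + f 1 = inverse h *\<^sub>R T (-1) + inverse (h\<^sup>2) *\<^sub>R T (-2)"
    by (simp add: f_def power_int_minus flip: cscaleL_of_real)
  finally have Q: "Q = inverse h *\<^sub>R T (-1) + inverse (h\<^sup>2) *\<^sub>R T (-2)" .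
  have "(\<lambda>k. h ^ Suc (Suc k) *\<^sub>R T (int (Suc (Suc k)) - 2)) sums (h\<^sup>2 *\<^sub>R P)"
    using sums_scaleR_right[OF regular[unfolded of_real_power[symmetric] cscaleL_of_real], of "h\<^sup>2"]
    by (simp add: power2_eq_square mult_ac)
  hence "(\<lambda>k. h ^ Suc k *\<^sub>R T (int (Suc k) - 2)) sums (h\<^sup>2 *\<^sub>R P + h *\<^sub>R T (-1))"
    by (subst (asm) sums_Suc_iff) simp
  hence "(\<lambda>k. h ^ k *\<^sub>R T (int k - 2)) sums (h\<^sup>2 *\<^sub>R P + h *\<^sub>R T (-1) + T (-2))"
    by (subst (asm) sums_Suc_iff) simp
  thus ?thesis
    using \<open>h \<noteq> 0\<close> by (simp add: Q scaleR_add_right power2_eq_square field_simps)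
qed

lemma convolution_solves_pencil_recursion:
  fixes A0 A1 :: "'a::real_normed_vector \<Rightarrow>\<^sub>L 'b::real_normed_vector"
    and K :: "nat \<Rightarrow> 'b \<Rightarrow> 'a" and G :: "int \<Rightarrow> 'b"
  assumes K_0: "\<And>v. A0 (K 0 v) = v" and K_Suc: "\<And>s v. A0 (K (Suc s) v) + A1 (K s v) = 0"
    and e: "A0 e + A1 e = 0"
  defines "u \<equiv> \<lambda>t. e + (\<Sum>s=0..t. K s (G (int t - int s)))"
  shows "A0 (u 0) + A1 e = G 0" and "A0 (u (Suc t)) + A1 (u t) = G (int (Suc t))"
proof -
  show "A0 (u 0) + A1 e = G 0"
    using e by (simp add: u_def blinfun.add_right K_0 algebra_simps)
  have "(\<Sum>s=0..Suc t. K s (G (int (Suc t) - int s)))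
      = K 0 (G (int (Suc t))) + (\<Sum>s=0..t. K (Suc s) (G (int t - int s)))"
    by (subst sum.atLeast0_atMost_Suc_shift) simp
  hence "A0 (u (Suc t)) + A1 (u t) = (A0 e + A1 e) + A0 (K 0 (G (int (Suc t))))
      + (\<Sum>s=0..t. A0 (K (Suc s) (G (int t - int s))) + A1 (K s (G (int t - int s))))"
    by (simp add: u_def blinfun.add_right blinfun.sum_right sum.distrib algebra_simps)
  thus "A0 (u (Suc t)) + A1 (u t) = G (int (Suc t))"
    by (simp add: e K_0 K_Suc)
qed

lemma pencil_recursion_unique:
  fixes A B :: "'a \<Rightarrow> 'b::cancel_semigroup_add"
  assumes "inj A"
    and "A (u 0) + B c = G 0" "A (v 0) + B c = G 0"
    and "\<And>t. A (u (Suc t)) + B (u t) = G (Suc t)" "\<And>t. A (v (Suc t)) + B (v t) = G (Suc t)"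
  shows "u t = v t"
proof (induction t)
  case 0
  show ?case using assms(2,3) injD[OF \<open>inj A\<close>] add_right_imp_eq by metis
next
  case (Suc t)
  show ?case using assms(4,5)[of t] Suc injD[OF \<open>inj A\<close>] add_right_imp_eq by metis
qed

text \<open>
  The coefficient identities of a Laurent expansion R(z) = \<Sigma>_j T_j (z-1)^j, with T_j = 0 for j \<le> -3,
  of the inverse of C_0 + C_1 (z-1); R0 is the inverse of the pencil at z = 0, i.e. of C_0 - C_1.
\<close>

locale pole_order_two =
  fixes T :: "int \<Rightarrow> ('y::complex_banach \<Rightarrow>\<^sub>L 'x::complex_banach)"
    and C0 C1 :: "'x \<Rightarrow>\<^sub>L 'y" and R0 :: "'y \<Rightarrow>\<^sub>L 'x"
  assumes left_identity: "T j (C0 u) + T (j - 1) (C1 u) = (if j = 0 then u else 0)"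
    and right_identity: "C0 (T j y) + C1 (T (j - 1) y) = (if j = 0 then y else 0)"
    and T_vanishes: "j \<le> -3 \<Longrightarrow> T j = 0"
    and R0_inverse: "R0 o\<^sub>L (C0 - C1) = id_blinfun" "(C0 - C1) o\<^sub>L R0 = id_blinfun"
begin

lemma R0_left: "R0 (C0 u - C1 u) = u"
  using R0_inverse(1) by (metis blinfun.diff_left blinfun_apply_blinfun_compose blinfun_apply_id_blinfun)

lemma R0_right: "C0 (R0 y) - C1 (R0 y) = y"
  using R0_inverse(2) by (metis blinfun.diff_left blinfun_apply_blinfun_compose blinfun_apply_id_blinfun)

lemma T_C1_T_shift:
  "T (a - 1) (C1 (T b y)) - T a (C1 (T (b - 1) y))
     = (if a = 0 then T b y else 0) - (if b = 0 then T a y else 0)"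
proof -
  have right: "T a (C0 (T b y)) + T a (C1 (T (b - 1) y)) = (if b = 0 then T a y else 0)"
    using arg_cong[OF right_identity[of b y], of "T a"] by (simp add: blinfun.add_right)
  have "T (a - 1) (C1 (T b y)) - T a (C1 (T (b - 1) y))
      = (T a (C0 (T b y)) + T (a - 1) (C1 (T b y))) - (T a (C0 (T b y)) + T a (C1 (T (b - 1) y)))"
    by simp
  also have "\<dots> = (if a = 0 then T b y else 0) - (if b = 0 then T a y else 0)"
    by (simp only: left_identity right)
  finally show ?thesis .
qed

lemma T_m2_C0: "T (-2) (C0 u) = 0"
  using left_identity[of "-2" u] T_vanishes[of "-3"] by simp

lemma C0_T_m2: "C0 (T (-2) y) = 0"
  using right_identity[of "-2" y] T_vanishes[of "-3"] by simp

lemma T_m1_C0: "T (-1) (C0 u) = - T (-2) (C1 u)"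
  using left_identity[of "-1" u] by (simp add: eq_neg_iff_add_eq_0)

lemma C0_T_m1: "C0 (T (-1) y) = - C1 (T (-2) y)"
  using right_identity[of "-1" y] by (simp add: eq_neg_iff_add_eq_0)

lemma T0_C0: "T 0 (C0 u) = u - T (-1) (C1 u)"
  using left_identity[of 0 u] by (simp add: eq_diff_eq)

lemma C0_T0: "C0 (T 0 y) = y - C1 (T (-1) y)"
  using right_identity[of 0 y] by (simp add: eq_diff_eq)

lemma T0_C1_T_m1: "T 0 (C1 (T (-1) y)) = 0"
  using T_C1_T_shift[of 1 "-1" y] T_C1_T_shift[of 2 "-2" y] T_vanishes[of "-3"] by simp

lemma T_m1_C1_T0: "T (-1) (C1 (T 0 y)) = 0"
  using T_C1_T_shift[of 0 0 y] T0_C1_T_m1[of y] by simp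

lemma T_m1_C1_T_m1: "T (-1) (C1 (T (-1) y)) = T (-1) y"
  using T_C1_T_shift[of "-1" 0 y] T_C1_T_shift[of "-2" 1 y] T_vanishes[of "-3"] by simp

lemma T_m1_C0_T0: "T (-1) (C0 (T 0 y)) = 0"
  using T_m1_C0[of "T 0 y"] T_C1_T_shift[of "-2" 1 y] T_vanishes[of "-3"] by simp

lemma T_m2_eq: "T (-2) y = T (-1) (- C0 (T (-1) y))"
proof -
  have "T (-2) y = T (-2) (C0 (T 0 y) + C1 (T (-1) y))" using right_identity[of 0 y] by simp
  also have "\<dots> = - T (-1) (C0 (T (-1) y))"
    by (simp add: blinfun.add_right T_m2_C0 T_m1_C0)
  finally show ?thesis by (simp add: blinfun.minus_right)
qed

definition P :: "'x \<Rightarrow>\<^sub>L 'x" where "P = T (-1) o\<^sub>L C1"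

text \<open>N is the identity on the range of P and (I - P) R0 C0 on its kernel; it inverts I - T_0 C_1.\<close>

definition N :: "'x \<Rightarrow>\<^sub>L 'x" where
  "N = P + ((id_blinfun - P) o\<^sub>L R0 o\<^sub>L C0 o\<^sub>L (id_blinfun - P))"

lemma P_apply: "P x = T (-1) (C1 x)"
  by (simp add: P_def)

lemma N_apply: "N x = P x + (R0 (C0 (x - P x)) - P (R0 (C0 (x - P x))))"
  unfolding N_def
  by (simp only: blinfun.add_left blinfun.diff_left blinfun_apply_blinfun_compose blinfun_apply_id_blinfun)

lemma P_idem: "P (P x) = P x"
  by (simp add: P_apply T_m1_C1_T_m1)

lemma P_N: "P (N x) = P x"
proof -
  define z where "z = R0 (C0 (x - P x))"
  have "N x = P x + (z - P z)" by (simp add: N_apply z_def)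
  thus ?thesis by (simp add: blinfun.add_right blinfun.diff_right P_idem)
qed

lemma P_T0: "P (T 0 y) = 0"
  by (simp add: P_apply T_m1_C1_T0)

lemma T0_C1_P: "T 0 (C1 (P x)) = 0"
  by (simp add: P_apply T0_C1_T_m1)

lemma N_P: "N (P x) = P x"
  by (simp add: N_apply P_idem)

lemma C1_T_m1_pencil: "C1 (T (-1) (C0 u - C1 u)) = C0 (P u) - C1 (P u)"
  by (simp add: P_apply blinfun.diff_right T_m1_C0 C0_T_m1 blinfun.minus_right)

lemma pencil_N_T0: "C0 (N (T 0 y)) - C1 (N (T 0 y)) = C0 (T 0 y)"
proof -
  define z where "z = R0 (C0 (T 0 y))"
  have "N (T 0 y) = z - P z" by (simp add: N_apply P_T0 z_def)
  hence "C0 (N (T 0 y)) - C1 (N (T 0 y)) = (C0 z - C1 z) - (C0 (P z) - C1 (P z))"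
    by (simp add: blinfun.diff_right)
  also have "C0 (P z) - C1 (P z) = 0"
    using C1_T_m1_pencil[of z] by (simp add: z_def R0_right T_m1_C0_T0)
  finally show ?thesis by (simp add: z_def R0_right)
qed

lemma I_minus_T0_C1_eq: "x - T 0 (C1 x) = P x + T 0 (C0 x - C1 x)"
  by (simp add: blinfun.diff_right T0_C0 P_apply)

lemma N_right_inverse: "N x - T 0 (C1 (N x)) = x"
proof -
  define z where "z = R0 (C0 (x - P x))"
  have "N x = P x + (z - P z)" by (simp add: N_apply z_def)
  hence "N x - T 0 (C1 (N x)) = P x + (z - P z - T 0 (C1 z))"
    by (simp add: blinfun.add_right blinfun.diff_right T0_C1_P)
  also have "z - P z - T 0 (C1 z) = T 0 (C0 z - C1 z)"
    by (simp add: blinfun.diff_right T0_C0 P_apply)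
  also have "C0 z - C1 z = C0 (x - P x)" by (simp only: z_def R0_right)
  also have "T 0 (C0 (x - P x)) = x - P x"
    by (simp add: blinfun.diff_right T0_C0 P_apply T_m1_C1_T_m1)
  finally show ?thesis by simp
qed

lemma N_left_inverse: "N (x - T 0 (C1 x)) = x"
proof -
  define w where "w = T 0 (C0 x - C1 x)"
  have "N w = R0 (C0 w) - P (R0 (C0 w))" by (simp add: N_apply w_def P_T0)
  also have "C0 w = C0 (x - P x) - C1 (x - P x)"
    using C1_T_m1_pencil[of x] by (simp add: w_def C0_T0 blinfun.diff_right P_apply)
  also have "R0 (C0 (x - P x) - C1 (x - P x)) = x - P x" by (rule R0_left)
  finally have "N w = x - P x" by (simp add: blinfun.diff_right P_idem)
  thus ?thesis by (simp add: I_minus_T0_C1_eq blinfun.add_right N_P w_def)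
qed

lemma op_inv_I_minus_T0_C1: "op_inv (id_blinfun - (T 0 o\<^sub>L C1)) = N"
  and op_invertible_I_minus_T0_C1: "op_invertible (id_blinfun - (T 0 o\<^sub>L C1))"
proof -
  have "N o\<^sub>L (id_blinfun - (T 0 o\<^sub>L C1)) = id_blinfun"
    by (rule blinfun_eqI) (simp add: blinfun.diff_left N_left_inverse)
  moreover have "(id_blinfun - (T 0 o\<^sub>L C1)) o\<^sub>L N = id_blinfun"
    by (rule blinfun_eqI) (simp add: blinfun.diff_left N_right_inverse)
  ultimately show "op_inv (id_blinfun - (T 0 o\<^sub>L C1)) = N"
    and "op_invertible (id_blinfun - (T 0 o\<^sub>L C1))"
    by (auto simp: op_invertible_def intro: op_inv_eqI)
qed


lemma N_T0_C1_commute: "N (T 0 (C1 x)) = T 0 (C1 (N x))"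
proof -
  have "N x - N (T 0 (C1 x)) = N x - T 0 (C1 (N x))"
    using N_left_inverse[of x] N_right_inverse[of x] by (simp add: blinfun.diff_right)
  thus ?thesis by simp
qed

lemma op_pow_N_T0_C1_commute: "op_pow N k (T 0 (C1 x)) = T 0 (C1 (op_pow N k x))"
  by (induction k) (simp_all add: op_pow_Suc_apply N_T0_C1_commute)

lemma P_op_pow_N: "P (op_pow N k x) = P x"
  by (induction k) (simp_all add: op_pow_Suc_apply P_N)

lemma P_op_pow_T0_C1: "P (op_pow (T 0 o\<^sub>L C1) k (T 0 v)) = 0"
  by (cases k) (simp_all add: op_pow_Suc_apply P_T0)

abbreviation V :: "nat \<Rightarrow> 'y \<Rightarrow>\<^sub>L 'x" where "V \<equiv> Vcoef (T 0) C1"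

lemma V_eq: "V s v = (-1) ^ s *\<^sub>R op_pow N (Suc s) (op_pow (T 0 o\<^sub>L C1) s (T 0 v))"
proof -
  have "cscaleL ((-1) ^ s) X = (-1) ^ s *\<^sub>R X" for X :: "'y \<Rightarrow>\<^sub>L 'x"
    using cscaleL_of_real[of "(-1) ^ s" X] by simp
  thus ?thesis by (simp add: Vcoef_def op_inv_I_minus_T0_C1 blinfun.scaleR_left)
qed

lemma P_V: "P (V s v) = 0"
  by (simp add: V_eq blinfun.scaleR_right P_op_pow_N P_op_pow_T0_C1)

lemma V_Suc: "V (Suc s) v = - N (T 0 (C1 (V s v)))"
proof -
  have "V (Suc s) v = (-1) ^ Suc s *\<^sub>R N (op_pow N (Suc s) (T 0 (C1 (op_pow (T 0 o\<^sub>L C1) s (T 0 v)))))"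
    by (simp only: V_eq op_pow_Suc_apply blinfun_apply_blinfun_compose)
  also have "\<dots> = - N (T 0 (C1 (V s v)))"
    by (simp add: op_pow_N_T0_C1_commute V_eq blinfun.scaleR_right)
  finally show ?thesis .
qed

lemma pencil_V_Suc: "C0 (V (Suc s) v) - C1 (V (Suc s) v) + C1 (V s v) = 0"
proof -
  have "C0 (N (T 0 (C1 (V s v)))) - C1 (N (T 0 (C1 (V s v)))) = C1 (V s v)"
    using pencil_N_T0[of "C1 (V s v)"] P_V[of s v] by (simp add: C0_T0 P_apply)
  thus ?thesis by (simp add: V_Suc blinfun.minus_right algebra_simps)
qed

lemma pencil_V_0: "C0 (V 0 v) - C1 (V 0 v) = C0 (T 0 v)"
  using pencil_N_T0[of v] by (simp add: V_eq op_pow_Suc_apply)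


text \<open>The Maclaurin coefficients U_s + V_s of R: T_{-2}/(z-1)^2 + T_{-1}/(z-1) contributes (s+1) T_{-2} - T_{-1}.\<close>

definition R_coeff :: "nat \<Rightarrow> 'y \<Rightarrow>\<^sub>L 'x" where
  "R_coeff s = (real s + 1) *\<^sub>R T (-2) - T (-1) + V s"

lemma R_coeff_apply: "R_coeff s v = ((real s + 1) *\<^sub>R T (-2) v - T (-1) v) + V s v"
  by (simp add: R_coeff_def blinfun.add_left blinfun.diff_left blinfun.scaleR_left)

lemma pencil_R_coeff_0: "(C0 - C1) (R_coeff 0 v) = v"
proof -
  have "(C0 - C1) (R_coeff 0 v)
      = (C0 (T (-2) v) - C1 (T (-2) v)) - (C0 (T (-1) v) - C1 (T (-1) v)) + (C0 (V 0 v) - C1 (V 0 v))"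
    by (simp add: R_coeff_apply blinfun.diff_left blinfun.add_right blinfun.diff_right algebra_simps)
  also have "\<dots> = v" by (simp add: C0_T_m2 C0_T_m1 pencil_V_0 C0_T0)
  finally show ?thesis .
qed

lemma pencil_R_coeff_Suc: "(C0 - C1) (R_coeff (Suc s) v) + C1 (R_coeff s v) = 0"
proof -
  define p where "p k = (real k + 1) *\<^sub>R T (-2) v - T (-1) v" for k
  have "(C0 - C1) (p (Suc s)) + C1 (p s) = 0"
    by (simp add: p_def blinfun.diff_left blinfun.diff_right blinfun.scaleR_right C0_T_m2 C0_T_m1)
       (simp add: algebra_simps scaleR_2)
  moreover have "(C0 - C1) (V (Suc s) v) + C1 (V s v) = 0"
    using pencil_V_Suc[of s v] by (simp add: blinfun.diff_left)
  moreover have "(C0 - C1) (R_coeff (Suc s) v) + C1 (R_coeff s v)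
      = ((C0 - C1) (p (Suc s)) + C1 (p s)) + ((C0 - C1) (V (Suc s) v) + C1 (V s v))"
    by (simp only: R_coeff_apply p_def blinfun.add_right add_ac)
  ultimately show ?thesis by simp
qed

lemma recursion_solution:
  assumes init: "x (-1) = T (-2) d"
    and recursion: "\<And>t. t \<ge> 0 \<Longrightarrow> (C0 - C1) (x t) + C1 (x (t - 1)) = G t"
  shows "x (int t) = T (-2) d + (\<Sum>s=0..t. R_coeff s (G (int t - int s)))"
proof (rule pencil_recursion_unique[where A = "blinfun_apply (C0 - C1)" and B = C1 and c = "T (-2) d"
      and G = "\<lambda>t. G (int t)" and u = "\<lambda>t. x (int t)"
      and v = "\<lambda>t. T (-2) d + (\<Sum>s=0..t. R_coeff s (G (int t - int s)))"])
  show "inj (blinfun_apply (C0 - C1))"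
    by (rule inj_on_inverseI[where g = R0]) (simp add: blinfun.diff_left R0_left)
  have "(C0 - C1) (T (-2) d) + C1 (T (-2) d) = 0"
    by (simp add: blinfun.diff_left C0_T_m2)
  note solution = convolution_solves_pencil_recursion[where K = "\<lambda>s. blinfun_apply (R_coeff s)" and G = G,
      OF pencil_R_coeff_0 pencil_R_coeff_Suc this]
  show "(C0 - C1) (T (-2) d + (\<Sum>s=0..0. R_coeff s (G (int 0 - int s)))) + C1 (T (-2) d) = G (int 0)"
    using solution(1) by simp
  show "(C0 - C1) (T (-2) d + (\<Sum>s=0..Suc t. R_coeff s (G (int (Suc t) - int s))))
      + C1 (T (-2) d + (\<Sum>s=0..t. R_coeff s (G (int t - int s)))) = G (int (Suc t))" for t
    using solution(2) .
  show "(C0 - C1) (x (int 0)) + C1 (T (-2) d) = G (int 0)"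
    using recursion[of 0] init by simp
  show "(C0 - C1) (x (int (Suc t))) + C1 (x (int t)) = G (int (Suc t))" for t
    using recursion[of "int (Suc t)"] by simp
qed

lemma sum_R_coeff_eq:
  "(\<Sum>s=0..t. R_coeff s (G s)) =
     T (-2) (\<Sum>s=0..t. real (s + 1) *\<^sub>R G s) - T (-1) (\<Sum>s=0..t. G s) + (\<Sum>s=0..t. V s (G s))"
  by (simp add: R_coeff_def blinfun.add_left blinfun.diff_left blinfun.scaleR_left
      blinfun.sum_right blinfun.scaleR_right sum.distrib sum_subtractf add_ac)

end

lemma pole_order_two_of_resolvent:
  fixes A0 A1 :: "'x::complex_banach \<Rightarrow>\<^sub>L 'y::complex_banach"
    and R :: "complex \<Rightarrow> ('y \<Rightarrow>\<^sub>L 'x)" and T :: "int \<Rightarrow> ('y \<Rightarrow>\<^sub>L 'x)"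
  assumes "\<epsilon> > 0"
    and resolvent_0: "R 0 o\<^sub>L pencil A0 A1 0 = id_blinfun" "pencil A0 A1 0 o\<^sub>L R 0 = id_blinfun"
    and resolvent_real: "\<And>h. 0 < h \<Longrightarrow> h < \<epsilon> \<Longrightarrow>
        R (1 + complex_of_real h) o\<^sub>L pencil A0 A1 (1 + complex_of_real h) = id_blinfun \<and>
        pencil A0 A1 (1 + complex_of_real h) o\<^sub>L R (1 + complex_of_real h) = id_blinfun"
    and Laurent: "\<forall>z. 0 < cmod (z - 1) \<and> cmod (z - 1) < \<epsilon> \<longrightarrow>
        (\<exists>P Q. (\<lambda>k. cscaleL ((z - 1) ^ k) (T (int k))) sums P \<and>
               (\<lambda>k. cscaleL ((z - 1) powi (- int (Suc k))) (T (- int (Suc k)))) sums Q \<and>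
               R z = P + Q)"
    and T_vanishes: "\<And>j. j \<le> -3 \<Longrightarrow> T j = 0"
  shows "pole_order_two T (A0 + A1) A1 (R 0)"
proof
  have pencil_real: "pencil A0 A1 (1 + complex_of_real h) u = (A0 + A1) u + h *\<^sub>R A1 u" for h u
    by (simp add: pencil_apply cscale_add_left cscale_one cscale_of_real blinfun.add_left)
  have expansion: "(\<lambda>k. h ^ k *\<^sub>R T (int k - 2)) sums (h\<^sup>2 *\<^sub>R R (1 + complex_of_real h))"
    if h: "0 < h" "h < \<epsilon>" for h
  proof -
    obtain P Q where P: "(\<lambda>k. cscaleL (complex_of_real h ^ k) (T (int k))) sums P"
      and Q: "(\<lambda>k. cscaleL (complex_of_real h powi - int (Suc k)) (T (- int (Suc k)))) sums Q"
      and "R (1 + complex_of_real h) = P + Q"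
      using Laurent[rule_format, of "1 + complex_of_real h"] h by auto
    with laurent_series_pole_order_two_at_real[OF P Q T_vanishes] h show ?thesis by simp
  qed
  fix j u y
  show "T j ((A0 + A1) u) + T (j - 1) (A1 u) = (if j = 0 then u else 0)"
  proof (rule laurent_pencil_coeff_identity[where F = "\<lambda>h. R (1 + complex_of_real h)",
        OF _ _ \<open>\<epsilon> > 0\<close> T_vanishes expansion])
    fix h :: real assume "0 < h" "h < \<epsilon>"
    from resolvent_real[OF this]
    show "R (1 + complex_of_real h) ((A0 + A1) u) + h *\<^sub>R R (1 + complex_of_real h) (A1 u) = u"
      by (metis pencil_real blinfun.add_right blinfun.scaleR_right blinfun_apply_blinfun_compose
          blinfun_apply_id_blinfun)
  qed auto
  show "(A0 + A1) (T j y) + A1 (T (j - 1) y) = (if j = 0 then y else 0)"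
  proof (rule laurent_pencil_coeff_identity[where F = "\<lambda>h. R (1 + complex_of_real h)",
        OF _ _ \<open>\<epsilon> > 0\<close> T_vanishes expansion])
    fix h :: real assume "0 < h" "h < \<epsilon>"
    from resolvent_real[OF this]
    show "(A0 + A1) (R (1 + complex_of_real h) y) + h *\<^sub>R A1 (R (1 + complex_of_real h) y) = y"
      by (metis pencil_real blinfun_apply_blinfun_compose blinfun_apply_id_blinfun)
  qed (auto intro: bounded_linear_compose[OF blinfun.bounded_linear_right blinfun.bounded_linear_left])
  have "pencil A0 A1 0 = A0 + A1 - A1"
    by (rule blinfun_eqI) (simp add: pencil_apply)
  thus "R 0 o\<^sub>L (A0 + A1 - A1) = id_blinfun" "(A0 + A1 - A1) o\<^sub>L R 0 = id_blinfun"
    using resolvent_0 by simp_all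
qed (use T_vanishes in simp)

theorem mainTheorem7:
  fixes A0 A1 F0 F1 :: "'x::complex_banach \<Rightarrow>\<^sub>L 'y::complex_banach"
    and R :: "complex \<Rightarrow> ('y \<Rightarrow>\<^sub>L 'x)"
    and T :: "int \<Rightarrow> ('y \<Rightarrow>\<^sub>L 'x)"
    and \<epsilon> \<theta> :: real
    and M :: "'w measure"
    and n :: "int \<Rightarrow> 'w \<Rightarrow> 'x"
    and x :: "int \<Rightarrow> 'w \<Rightarrow> 'x"
    and c :: 'x and d :: 'y
  defines "C0 \<equiv> A0 + A1" and "C1 \<equiv> A1"
    and "S \<equiv> {z. cmod z < 1 + \<epsilon> \<and> z \<noteq> 1} \<union> {z. 0 < cmod (z - 1) \<and> cmod (z - 1) < 1 + \<theta>}"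
    and "g \<equiv> (\<lambda>t \<omega>. F0 (n t \<omega>) + F1 (n (t - 1) \<omega>))"
  assumes lin: "clinear_op A0" "clinear_op A1" "clinear_op F0" "clinear_op F1"
    and eps: "\<epsilon> > 0" and theta: "\<theta> > 0"
    and Rinv: "\<forall>z\<in>S. R z o\<^sub>L pencil A0 A1 z = id_blinfun \<and> pencil A0 A1 z o\<^sub>L R z = id_blinfun"
    and Rhol: "op_holomorphic_on R S"
    and Tlin: "\<forall>j. clinear_op (T j)"
    and Laurent: "\<forall>z. 0 < cmod (z - 1) \<and> cmod (z - 1) < \<epsilon> \<longrightarrow>
        (\<exists>P Q. (\<lambda>k. cscaleL ((z - 1) ^ k) (T (int k))) sums P \<and>
               (\<lambda>k. cscaleL ((z - 1) powi (- int (Suc k))) (T (- int (Suc k)))) sums Q \<and>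
               R z = P + Q)"
    and pole2: "T (-2) \<noteq> 0" "\<forall>k::int. k \<ge> 3 \<longrightarrow> T (- k) = 0"
    and prob: "prob_space M"
    and n_meas: "\<forall>t. bochner_measurable M (n t)"
    and n_rv: "\<forall>t. n t \<in> borel_measurable M"
    and n_indep: "prob_space.indep_vars M (\<lambda>_. borel) n UNIV"
    and n_ident: "\<forall>t. distr M borel (n t) = distr M borel (n 0)"
    and n_sq: "\<forall>t. integrable M (\<lambda>\<omega>. (norm (n t \<omega>))\<^sup>2)"
    and n_mean: "\<forall>t. has_bochner_integral_gen M (n t) 0"
    and x_rv: "\<forall>t\<ge>-1. x t \<in> borel_measurable M"
    and x_init: "\<forall>\<omega>\<in>space M. x (-1) \<omega> = c"
    and x_rec: "\<forall>t\<ge>0. \<forall>\<omega>\<in>space M. A0 (x t \<omega>) + A1 (x (t - 1) \<omega>) = g t \<omega>"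
    and c_def: "c = T (-2) d"
  shows "op_invertible (id_blinfun - (T 0 o\<^sub>L C1))
    \<and> (\<forall>t::nat. \<forall>\<omega>\<in>space M.
         x (int t) \<omega> =
           T (-2) (\<Sum>s=0..t. real (s + 1) *\<^sub>R g (int t - int s) \<omega>)
           - T (-1) (\<Sum>s=0..t. g (int t - int s) \<omega>)
           + T (-2) d
           + real (t + 1) *\<^sub>R (T (-2) o\<^sub>L C0 o\<^sub>L T (-2)) d
           + (\<Sum>s=0..t. Vcoef (T 0) C1 s (g (int t - int s) \<omega>)))
    \<and> range (blinfun_apply (T (-2))) \<subseteq> range (blinfun_apply (T (-1)))
    \<and> (\<forall>f :: 'x \<Rightarrow>\<^sub>L complex. clinear_op f \<and> (\<forall>u\<in>range (blinfun_apply (T (-2))). f u = 0) \<longrightarrow>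
         (\<forall>t::nat. \<forall>\<omega>\<in>space M.
            f (x (int t) \<omega>) =
              - f (T (-1) (\<Sum>s=0..t. g (int t - int s) \<omega>))
              + (\<Sum>s=0..t. f (Vcoef (T 0) C1 s (g (int t - int s) \<omega>)))))"
proof -
  have T_vanishes: "T j = 0" if "j \<le> -3" for j
    using pole2(2)[rule_format, of "- j"] that by simp
  have "0 \<in> S" using eps by (simp add: S_def)
  have in_S: "1 + complex_of_real h \<in> S" if "0 < h" "h < \<epsilon>" for h
    using that norm_of_real[of "1 + h", where 'a = complex] by (simp add: S_def)
  interpret pole_order_two T C0 C1 "R 0"
    unfolding C0_def C1_def
    by (rule pole_order_two_of_resolvent[OF eps _ _ _ Laurent T_vanishes])
      (use Rinv \<open>0 \<in> S\<close> in_S in auto)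
  have solution: "x (int t) \<omega> =
      T (-2) d + T (-2) (\<Sum>s=0..t. real (s + 1) *\<^sub>R g (int t - int s) \<omega>)
      - T (-1) (\<Sum>s=0..t. g (int t - int s) \<omega>)
      + (\<Sum>s=0..t. Vcoef (T 0) C1 s (g (int t - int s) \<omega>))"
    if "\<omega> \<in> space M" for t \<omega>
    using recursion_solution[of "\<lambda>t. x t \<omega>" d "\<lambda>t. g t \<omega>" t] x_init x_rec that c_def
      sum_R_coeff_eq[where t = t and G = "\<lambda>s. g (int t - int s) \<omega>"]
    by (simp add: C0_def C1_def add.assoc)
  show ?thesis
  proof (intro conjI op_invertible_I_minus_T0_C1 allI ballI impI)
    show "x (int t) \<omega> = T (-2) (\<Sum>s=0..t. real (s + 1) *\<^sub>R g (int t - int s) \<omega>)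
        - T (-1) (\<Sum>s=0..t. g (int t - int s) \<omega>) + T (-2) d
        + real (t + 1) *\<^sub>R (T (-2) o\<^sub>L C0 o\<^sub>L T (-2)) d
        + (\<Sum>s=0..t. Vcoef (T 0) C1 s (g (int t - int s) \<omega>))" if "\<omega> \<in> space M" for t \<omega>
      using solution[OF that] by (simp add: T_m2_C0)
    show "range (blinfun_apply (T (-2))) \<subseteq> range (blinfun_apply (T (-1)))"
      using T_m2_eq by blast
    fix f :: "'x \<Rightarrow>\<^sub>L complex" and t :: nat and \<omega>
    assume "clinear_op f \<and> (\<forall>u\<in>range (blinfun_apply (T (-2))). f u = 0)" "\<omega> \<in> space M"
    thus "f (x (int t) \<omega>) = - f (T (-1) (\<Sum>s=0..t. g (int t - int s) \<omega>))
        + (\<Sum>s=0..t. f (Vcoef (T 0) C1 s (g (int t - int s) \<omega>)))"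
      using solution by (simp add: blinfun.add_right blinfun.diff_right blinfun.sum_right)
  qed
qed

end
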